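(* Let $G=(V,E)$ be a nontrivial graph of order $n$ with $\tau(G)=\tau>\frac{n}{2}$, and suppose its $\tau$-set $W$ satisfies $G[W]\cong K_\tau$. Then: (a) if $G$ contains a $W$-distinguishing vertex, then $\beta_p(G)=\tau+1$; (b) if the induced subgraph $G[N(W)\setminus W]$ has an isolated vertex, then $\beta_p(G)=\tau+1$; (c) if $|N(W)\setminus W|=1$, then $\beta_p(G)=\tau+1$; (d) if $G[N(W)\setminus W]$ contains a universal vertex $v$ (adjacent to all other vertices of $N(W)\setminus W$), then $v$ is adjacent to at least one vertex of $V\setminus N[W]$.
   Context: All graphs are finite, simple, undirected and connected. $N(W)=\bigcup_{v\in W}N(v)$, $N[W]=N(W)\cup W$. Two vertices $u,v$ are twins if $N(u)\setminus\{v\}=N(v)\setminus\{u\}$; the twin number $\tau(G)$ is the maximum cardinality of an equivalence class of the twin relation; a $\tau$-set is a set of pairwise twin vertices of cardinality $\tau(G)$. Given a $\tau$-set $W$ with $G[W]$ complete, a vertex $v\in V\setminus W$ is $W$-distinguishing if $d(v,z)\ne d(v,W)$ for every $z\in N(W)\setminus W$, where $d(v,W)=\min_{w\in W}d(v,w)$. For a partition $\Pi=\{S_1,\dots,S_k\}$ of $V$, $r(u|\Pi)=(d(u,S_1),\dots,d(u,S_k))$; $\Pi$ is locating if $r(u|\Pi)\ne r(v|\Pi)$ for all distinct $u,v$; $\beta_p(G)$ is the minimum size of a locating partition. *)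

theory Defs
  imports Main
begin

definition walk :: "'a set \<Rightarrow> ('a \<Rightarrow> 'a \<Rightarrow> bool) \<Rightarrow> 'a list \<Rightarrow> bool" where
  "walk V E xs \<longleftrightarrow> xs \<noteq> [] \<and> set xs \<subseteq> V \<and>
     (\<forall>i. Suc i < length xs \<longrightarrow> E (xs ! i) (xs ! Suc i))"

definition connected_graph :: "'a set \<Rightarrow> ('a \<Rightarrow> 'a \<Rightarrow> bool) \<Rightarrow> bool" where
  "connected_graph V E \<longleftrightarrow> finite V \<and> V \<noteq> {} \<and>
     (\<forall>u v. E u v \<longrightarrow> u \<in> V \<and> v \<in> V) \<and>
     (\<forall>u v. E u v \<longrightarrow> E v u) \<and> (\<forall>u. \<not> E u u) \<and>
     (\<forall>u\<in>V. \<forall>v\<in>V. \<exists>xs. walk V E xs \<and> hd xs = u \<and> last xs = v)"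

definition gdist :: "'a set \<Rightarrow> ('a \<Rightarrow> 'a \<Rightarrow> bool) \<Rightarrow> 'a \<Rightarrow> 'a \<Rightarrow> nat" where
  "gdist V E u v = (LEAST k. \<exists>xs. walk V E xs \<and> hd xs = u \<and> last xs = v \<and> length xs = Suc k)"

definition setdist :: "'a set \<Rightarrow> ('a \<Rightarrow> 'a \<Rightarrow> bool) \<Rightarrow> 'a \<Rightarrow> 'a set \<Rightarrow> nat" where
  "setdist V E u S = Min (gdist V E u ` S)"

definition nbhd :: "'a set \<Rightarrow> ('a \<Rightarrow> 'a \<Rightarrow> bool) \<Rightarrow> 'a \<Rightarrow> 'a set" where
  "nbhd V E v = {x \<in> V. E v x}"

definition nbhd_set :: "'a set \<Rightarrow> ('a \<Rightarrow> 'a \<Rightarrow> bool) \<Rightarrow> 'a set \<Rightarrow> 'a set" where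
  "nbhd_set V E W = (\<Union>v\<in>W. nbhd V E v)"

definition closed_nbhd_set :: "'a set \<Rightarrow> ('a \<Rightarrow> 'a \<Rightarrow> bool) \<Rightarrow> 'a set \<Rightarrow> 'a set" where
  "closed_nbhd_set V E W = nbhd_set V E W \<union> W"

definition twins :: "'a set \<Rightarrow> ('a \<Rightarrow> 'a \<Rightarrow> bool) \<Rightarrow> 'a \<Rightarrow> 'a \<Rightarrow> bool" where
  "twins V E u v \<longleftrightarrow> nbhd V E u - {v} = nbhd V E v - {u}"

definition twin_class :: "'a set \<Rightarrow> ('a \<Rightarrow> 'a \<Rightarrow> bool) \<Rightarrow> 'a \<Rightarrow> 'a set" where
  "twin_class V E u = {v \<in> V. twins V E u v}"

definition twin_number :: "'a set \<Rightarrow> ('a \<Rightarrow> 'a \<Rightarrow> bool) \<Rightarrow> nat" where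
  "twin_number V E = Max ((\<lambda>u. card (twin_class V E u)) ` V)"

definition tau_set :: "'a set \<Rightarrow> ('a \<Rightarrow> 'a \<Rightarrow> bool) \<Rightarrow> 'a set \<Rightarrow> bool" where
  "tau_set V E W \<longleftrightarrow> W \<subseteq> V \<and> (\<forall>u\<in>W. \<forall>v\<in>W. twins V E u v) \<and>
     card W = twin_number V E"

definition is_complete_on :: "('a \<Rightarrow> 'a \<Rightarrow> bool) \<Rightarrow> 'a set \<Rightarrow> bool" where
  "is_complete_on E W \<longleftrightarrow> (\<forall>u\<in>W. \<forall>v\<in>W. u \<noteq> v \<longrightarrow> E u v)"

definition W_distinguishing :: "'a set \<Rightarrow> ('a \<Rightarrow> 'a \<Rightarrow> bool) \<Rightarrow> 'a set \<Rightarrow> 'a \<Rightarrow> bool" where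
  "W_distinguishing V E W v \<longleftrightarrow> v \<in> V - W \<and>
     (\<forall>z\<in>nbhd_set V E W - W. gdist V E v z \<noteq> setdist V E v W)"

definition is_partition :: "'a set \<Rightarrow> 'a set set \<Rightarrow> bool" where
  "is_partition V P \<longleftrightarrow> \<Union>P = V \<and> {} \<notin> P \<and>
     (\<forall>S\<in>P. \<forall>T\<in>P. S \<noteq> T \<longrightarrow> S \<inter> T = {})"

text \<open>Locating: the distance vectors r(u|P) and r(v|P) differ, i.e. some class
  has different distance from u and from v.\<close>
definition locating_partition :: "'a set \<Rightarrow> ('a \<Rightarrow> 'a \<Rightarrow> bool) \<Rightarrow> 'a set set \<Rightarrow> bool" where
  "locating_partition V E P \<longleftrightarrow> is_partition V P \<and>
     (\<forall>u\<in>V. \<forall>v\<in>V. u \<noteq> v \<longrightarrow> (\<exists>S\<in>P. setdist V E u S \<noteq> setdist V E v S))"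

definition partition_dimension :: "'a set \<Rightarrow> ('a \<Rightarrow> 'a \<Rightarrow> bool) \<Rightarrow> nat" where
  "partition_dimension V E = (LEAST k. \<exists>P. locating_partition V E P \<and> card P = k)"

end

theory Submission
  imports Defs
begin

text \<open>Twins have equal distance to every set containing neither of them, so a locating
  partition separates the vertices of the \<open>\<tau>\<close>-set \<open>W\<close> into distinct classes. If these were
  all the classes, a vertex adjacent to \<open>W\<close> would have the same distance vector as the vertex
  of \<open>W\<close> in its class; hence \<open>\<beta>\<^sub>p \<ge> \<tau> + 1\<close>. Conversely, given a \<open>W\<close>-distinguishing vertex \<open>v\<close>,
  the fewer than \<open>\<tau>\<close> remaining vertices outside \<open>W \<union> {v}\<close> are attached injectively to
  vertices of \<open>W\<close>, leaving some \<open>w\<^sub>s \<in> W\<close> alone. With the class \<open>{v}\<close> this gives \<open>\<tau> + 1\<close>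
  classes, and a vertex \<open>x\<close> attached to \<open>w\<close> is separated from \<open>w\<close> by \<open>{v}\<close> if \<open>x \<in> N(W)\<close> and
  by \<open>{w\<^sub>s}\<close> otherwise. An isolated vertex of \<open>G[N(W) - W]\<close> is itself \<open>W\<close>-distinguishing, and a
  universal vertex of \<open>G[N(W) - W]\<close> without neighbours outside \<open>N[W]\<close> would be a twin of
  the vertices of \<open>W\<close>, contradicting the maximality of \<open>\<tau>\<close>.\<close>

lemma walk_snoc_iff:
  assumes "ys \<noteq> []"
  shows "walk V E (ys @ [a]) \<longleftrightarrow> walk V E ys \<and> a \<in> V \<and> E (last ys) a"
proof
  assume w: "walk V E (ys @ [a])"
  have "walk V E ys" unfolding walk_def
  proof (intro conjI allI impI)
    show "ys \<noteq> []" by fact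
    show "set ys \<subseteq> V" using w by (auto simp: walk_def)
    fix i assume "Suc i < length ys"
    then have "Suc i < length (ys @ [a])" by simp
    then have "E ((ys @ [a]) ! i) ((ys @ [a]) ! Suc i)" using w by (simp add: walk_def)
    then show "E (ys ! i) (ys ! Suc i)" using \<open>Suc i < length ys\<close> by (simp add: nth_append)
  qed
  moreover have "a \<in> V" using w by (auto simp: walk_def)
  moreover have "E (last ys) a"
  proof -
    have "Suc (length ys - 1) < length (ys @ [a])" using assms by simp
    then have "E ((ys @ [a]) ! (length ys - 1)) ((ys @ [a]) ! Suc (length ys - 1))"
      using w by (auto simp: walk_def)
    then show ?thesis using assms by (simp add: nth_append last_conv_nth)
  qed
  ultimately show "walk V E ys \<and> a \<in> V \<and> E (last ys) a" by blast
next
  assume h: "walk V E ys \<and> a \<in> V \<and> E (last ys) a"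
  show "walk V E (ys @ [a])" unfolding walk_def
  proof (intro conjI allI impI)
    show "ys @ [a] \<noteq> []" by simp
    show "set (ys @ [a]) \<subseteq> V" using h by (auto simp: walk_def)
    fix i assume i: "Suc i < length (ys @ [a])"
    show "E ((ys @ [a]) ! i) ((ys @ [a]) ! Suc i)"
    proof (cases "Suc i < length ys")
      case True then show ?thesis using h by (simp add: nth_append walk_def)
    next
      case False
      then have "i = length ys - 1" using i by simp
      then show ?thesis using h assms False i by (simp add: nth_append last_conv_nth)
    qed
  qed
qed

lemma walk_rev:
  assumes "\<And>u v. E u v \<Longrightarrow> E v u" and "walk V E xs"
  shows "walk V E (rev xs)"
  unfolding walk_def
proof (intro conjI allI impI)
  show "rev xs \<noteq> []" "set (rev xs) \<subseteq> V" using assms(2) by (auto simp: walk_def)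
  fix i assume i: "Suc i < length (rev xs)"
  have "E (xs ! (length xs - Suc (Suc i))) (xs ! Suc (length xs - Suc (Suc i)))"
    using assms(2) i by (simp add: walk_def)
  moreover have "Suc (length xs - Suc (Suc i)) = length xs - Suc i" using i by simp
  ultimately show "E (rev xs ! i) (rev xs ! Suc i)" using i assms(1) by (simp add: rev_nth)
qed

lemma walk_crossing_edge:
  assumes "walk V E xs" "hd xs \<notin> W" "last xs \<in> W"
  shows "\<exists>a b. E a b \<and> a \<in> V - W \<and> b \<in> W"
  using assms
proof (induction xs rule: rev_induct)
  case Nil then show ?case by (simp add: walk_def)
next
  case (snoc x xs)
  show ?case
  proof (cases "xs = []")
    case True then show ?thesis using snoc.prems by simp
  next
    case False
    then have "walk V E xs" "E (last xs) x"
      using walk_snoc_iff[OF False] snoc.prems(1) by blast+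
    moreover have "last xs \<in> V" using calculation(1) False by (auto simp: walk_def)
    ultimately show ?thesis using snoc False by (cases "last xs \<in> W") auto
  qed
qed

lemma gdist_le_length:
  assumes "walk V E xs" "hd xs = u" "last xs = v"
  shows "gdist V E u v \<le> length xs - 1"
proof -
  have "length xs = Suc (length xs - 1)" using assms(1) by (cases xs) (auto simp: walk_def)
  then show ?thesis unfolding gdist_def using assms by (intro Least_le) blast
qed

lemma setdist_singleton [simp]: "setdist V E a {b} = gdist V E a b"
  by (simp add: setdist_def)

lemma twins_sym: "twins V E a b \<Longrightarrow> twins V E b a"
  by (auto simp: twins_def)

lemma twins_adj:
  assumes "twins V E a b" "E a x" "x \<in> V" "x \<noteq> b"
  shows "E b x"
  using assms by (auto simp: twins_def nbhd_def)

lemma mem_boundary_iff: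
  "x \<in> nbhd_set V E W - W \<longleftrightarrow> x \<in> V - W \<and> (\<exists>w\<in>W. E w x)"
  by (auto simp: nbhd_set_def nbhd_def)

lemma partition_dimension_eqI:
  assumes "locating_partition V E P" "card P = k"
    and "\<And>Q. locating_partition V E Q \<Longrightarrow> k \<le> card Q"
  shows "partition_dimension V E = k"
  unfolding partition_dimension_def
  by (rule Least_equality) (use assms in blast)+

lemma locating_partitionD:
  assumes "locating_partition V E P"
  shows "is_partition V P"
    and "u \<in> V \<Longrightarrow> v \<in> V \<Longrightarrow> u \<noteq> v \<Longrightarrow> \<exists>S\<in>P. setdist V E u S \<noteq> setdist V E v S"
  using assms by (auto simp: locating_partition_def)

lemma partition_class_unique:
  "is_partition V P \<Longrightarrow> S \<in> P \<Longrightarrow> T \<in> P \<Longrightarrow> a \<in> S \<Longrightarrow> a \<in> T \<Longrightarrow> S = T"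
  by (auto simp: is_partition_def)

definition class_of :: "'a set set \<Rightarrow> 'a \<Rightarrow> 'a set" where
  "class_of P a = (THE S. S \<in> P \<and> a \<in> S)"

lemma class_of_eq:
  assumes "is_partition V P" "S \<in> P" "a \<in> S"
  shows "class_of P a = S"
  unfolding class_of_def
proof (rule the_equality)
  fix T assume "T \<in> P \<and> a \<in> T"
  then show "T = S" using partition_class_unique[OF assms(1)] assms(2,3) by blast
qed (use assms in blast)

lemma class_of_mem:
  assumes "is_partition V P" "a \<in> V"
  shows "class_of P a \<in> P" "a \<in> class_of P a"
proof -
  obtain S where "S \<in> P" "a \<in> S" using assms by (auto simp: is_partition_def)
  then show "class_of P a \<in> P" "a \<in> class_of P a" using class_of_eq[OF assms(1)] by auto
qed

lemma inj_into_larger_set: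
  assumes "finite A" "finite B" "card A < card B"
  obtains f b where "f ` A \<subseteq> B" "inj_on f A" "b \<in> B" "b \<notin> f ` A"
proof -
  obtain f where f: "f ` A \<subseteq> B" "inj_on f A"
    using card_le_inj[OF assms(1,2)] assms(3) by fastforce
  have "card (f ` A) < card B" using card_image[OF f(2)] assms(3) by simp
  then have "\<not> B \<subseteq> f ` A" using card_mono[OF finite_imageI[OF assms(1)]] by (meson not_le)
  then show ?thesis using that f by blast
qed

definition fibre_class :: "('a \<Rightarrow> 'a) \<Rightarrow> 'a set \<Rightarrow> 'a \<Rightarrow> 'a set" where
  "fibre_class f R w = insert w {x \<in> R. f x = w}"

lemma is_partition_fibre_classes:
  assumes "f ` R \<subseteq> W" "W \<inter> R = {}" "v \<notin> W \<union> R"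
  shows "is_partition (insert v (W \<union> R)) (insert {v} (fibre_class f R ` W))"
  unfolding is_partition_def
proof (intro conjI ballI impI)
  show "\<Union> (insert {v} (fibre_class f R ` W)) = insert v (W \<union> R)"
    using assms(1) by (auto simp: fibre_class_def)
  show "{} \<notin> insert {v} (fibre_class f R ` W)" by (auto simp: fibre_class_def)
  fix S T
  assume "S \<in> insert {v} (fibre_class f R ` W)" "T \<in> insert {v} (fibre_class f R ` W)" "S \<noteq> T"
  then show "S \<inter> T = {}" using assms by (auto simp: fibre_class_def)
qed

lemma card_fibre_classes:
  assumes "finite W" "W \<inter> R = {}" "v \<notin> W"
  shows "card (insert {v} (fibre_class f R ` W)) = card W + 1"
proof -
  have "inj_on (fibre_class f R) W"
    using assms(2) by (intro inj_onI) (auto simp: fibre_class_def)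
  moreover have "{v} \<notin> fibre_class f R ` W"
    using assms(3) by (auto simp: fibre_class_def)
  ultimately show ?thesis using assms(1) by (simp add: card_image)
qed

lemma fibre_class_mates:
  assumes "inj_on f R" "W \<inter> R = {}" "w \<in> W"
    and "a \<in> fibre_class f R w" "b \<in> fibre_class f R w" "a \<noteq> b"
  obtains "a = w" "b \<in> R" "f b = w" | "b = w" "a \<in> R" "f a = w"
  using assms by (auto simp: fibre_class_def dest: inj_onD)

locale connected_simple_graph =
  fixes V :: "'a set" and E :: "'a \<Rightarrow> 'a \<Rightarrow> bool"
  assumes connected: "connected_graph V E"
begin

lemma finite_vertices: "finite V"
  and adj_in_V: "E u v \<Longrightarrow> u \<in> V \<and> v \<in> V"
  and adj_sym: "E u v \<Longrightarrow> E v u"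
  and adj_irrefl: "\<not> E u u"
  and exists_walk: "u \<in> V \<Longrightarrow> v \<in> V \<Longrightarrow> \<exists>xs. walk V E xs \<and> hd xs = u \<and> last xs = v"
  using connected unfolding connected_graph_def by blast+

lemma shortest_walk:
  assumes "u \<in> V" "v \<in> V"
  obtains xs where "walk V E xs" "hd xs = u" "last xs = v" "length xs = Suc (gdist V E u v)"
proof -
  obtain xs where xs: "walk V E xs" "hd xs = u" "last xs = v" using exists_walk assms by blast
  have "length xs = Suc (length xs - 1)" using xs(1) by (cases xs) (auto simp: walk_def)
  then have "\<exists>k xs. walk V E xs \<and> hd xs = u \<and> last xs = v \<and> length xs = Suc k" using xs by blast
  then have "\<exists>xs. walk V E xs \<and> hd xs = u \<and> last xs = v \<and> length xs = Suc (gdist V E u v)"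
    unfolding gdist_def by (rule LeastI_ex)
  then show ?thesis using that by blast
qed

lemma gdist_self: "u \<in> V \<Longrightarrow> gdist V E u u = 0"
  using gdist_le_length[of V E "[u]" u u] by (simp add: walk_def)

lemma gdist_eq_0_iff:
  assumes "u \<in> V" "v \<in> V"
  shows "gdist V E u v = 0 \<longleftrightarrow> u = v"
proof
  assume "gdist V E u v = 0"
  moreover obtain xs where "hd xs = u" "last xs = v" "length xs = Suc (gdist V E u v)"
    using shortest_walk[OF assms] by blast
  ultimately show "u = v" by (cases xs) auto
qed (use gdist_self assms in simp)

lemma gdist_sym:
  assumes "u \<in> V" "v \<in> V"
  shows "gdist V E u v = gdist V E v u"
proof -
  have "gdist V E b a \<le> gdist V E a b" if ab: "a \<in> V" "b \<in> V" for a b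
  proof -
    obtain xs where xs: "walk V E xs" "hd xs = a" "last xs = b" "length xs = Suc (gdist V E a b)"
      using shortest_walk[OF ab] by blast
    have "walk V E (rev xs)" using walk_rev[OF _ xs(1)] adj_sym by blast
    moreover have "hd (rev xs) = b" "last (rev xs) = a" using xs
      by (auto simp: walk_def hd_rev last_rev)
    ultimately show ?thesis using gdist_le_length[of V E "rev xs" b a] xs by simp
  qed
  then show ?thesis using assms by (simp add: order_antisym)
qed

lemma gdist_adj_le:
  assumes "x \<in> V" "E a b"
  shows "gdist V E x b \<le> gdist V E x a + 1"
proof -
  have "a \<in> V" "b \<in> V" using adj_in_V assms(2) by auto
  obtain xs where xs: "walk V E xs" "hd xs = x" "last xs = a" "length xs = Suc (gdist V E x a)"
    using shortest_walk[OF assms(1) \<open>a \<in> V\<close>] by blast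
  then have "xs \<noteq> []" by auto
  then have "walk V E (xs @ [b])" using walk_snoc_iff[of xs] xs \<open>b \<in> V\<close> assms(2) by simp
  then show ?thesis using gdist_le_length[of V E "xs @ [b]" x b] xs \<open>xs \<noteq> []\<close> by simp
qed

lemma gdist_eq_1_iff:
  assumes "u \<in> V" "v \<in> V"
  shows "gdist V E u v = 1 \<longleftrightarrow> E u v"
proof
  assume "gdist V E u v = 1"
  moreover obtain xs where xs: "walk V E xs" "hd xs = u" "last xs = v"
    "length xs = Suc (gdist V E u v)"
    using shortest_walk[OF assms] by blast
  ultimately have "length xs = 2" by simp
  then obtain a b where "xs = [a, b]" by (auto simp: length_Suc_conv numeral_2_eq_2)
  then show "E u v" using xs by (auto simp: walk_def)
next
  assume "E u v"
  then have "gdist V E u v \<le> gdist V E u u + 1" using gdist_adj_le assms by blast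
  moreover have "u \<noteq> v" using \<open>E u v\<close> adj_irrefl by blast
  moreover have "gdist V E u v \<noteq> 0" using gdist_eq_0_iff assms \<open>u \<noteq> v\<close> by blast
  ultimately show "gdist V E u v = 1" using gdist_self assms(1) by simp
qed

lemma exists_closer_neighbour:
  assumes "x \<in> V" "a \<in> V" "x \<noteq> a"
  obtains p where "E p a" "gdist V E x p + 1 \<le> gdist V E x a"
proof -
  obtain xs where xs: "walk V E xs" "hd xs = x" "last xs = a" "length xs = Suc (gdist V E x a)"
    using shortest_walk[OF assms(1,2)] by blast
  have "length xs \<noteq> 1" using xs assms gdist_eq_0_iff by simp
  then obtain ys where ys: "xs = ys @ [a]" "ys \<noteq> []"
    using xs by (cases xs rule: rev_cases) auto
  then have ys': "walk V E ys" "E (last ys) a" "hd ys = x" using walk_snoc_iff[OF ys(2)] xs by auto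
  have "gdist V E x (last ys) \<le> length ys - 1" using gdist_le_length[OF ys'(1,3) refl] .
  then have "gdist V E x (last ys) + 1 \<le> gdist V E x a" using xs(4) ys by (cases ys) auto
  with ys'(2) show ?thesis by (rule that)
qed

lemma gdist_twins_eq:
  assumes "twins V E a b" "a \<in> V" "b \<in> V" "x \<in> V" "x \<noteq> a" "x \<noteq> b"
  shows "gdist V E x a = gdist V E x b"
proof -
  have "gdist V E x b \<le> gdist V E x a" if ab: "twins V E a b" "a \<in> V" "x \<noteq> a" for a b
  proof -
    obtain p where p: "E p a" "gdist V E x p + 1 \<le> gdist V E x a"
      using exists_closer_neighbour[OF assms(4) ab(2,3)] by blast
    show ?thesis
    proof (cases "p = b")
      case False
      have "E b p" using twins_adj[OF ab(1) adj_sym[OF p(1)]] adj_in_V[OF p(1)] False by blast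
      then show ?thesis using gdist_adj_le[OF assms(4) adj_sym] p(2) by (meson le_trans)
    qed (use p in simp)
  qed
  from this[OF assms(1,2,5)] this[OF twins_sym[OF assms(1)] assms(3,6)] show ?thesis by simp
qed

lemma setdist_eq_0_iff:
  assumes "a \<in> V" "S \<subseteq> V" "S \<noteq> {}"
  shows "setdist V E a S = 0 \<longleftrightarrow> a \<in> S"
proof -
  have "finite S" using finite_vertices assms finite_subset by blast
  then have "setdist V E a S = 0 \<longleftrightarrow> (\<exists>s\<in>S. gdist V E a s = 0)"
    using assms(3) by (auto simp: setdist_def Min_eq_iff intro: Min_in)
  then show ?thesis using gdist_eq_0_iff assms by blast
qed

lemma setdist_eq_1:
  assumes "a \<in> V" "S \<subseteq> V" "a \<notin> S" "b \<in> S" "E a b"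
  shows "setdist V E a S = 1"
proof -
  have "finite S" using finite_vertices assms finite_subset by blast
  have "setdist V E a S \<le> gdist V E a b"
    unfolding setdist_def using \<open>finite S\<close> assms(4) by simp
  also have "\<dots> = 1" using gdist_eq_1_iff assms by blast
  finally have "setdist V E a S \<le> 1" .
  moreover have "setdist V E a S \<noteq> 0" using setdist_eq_0_iff assms by blast
  ultimately show ?thesis by simp
qed

lemma setdist_twins_eq:
  assumes "twins V E a b" "a \<in> V" "b \<in> V" "S \<subseteq> V" "a \<notin> S" "b \<notin> S"
  shows "setdist V E a S = setdist V E b S"
proof -
  have "gdist V E a s = gdist V E b s" if "s \<in> S" for s
    using gdist_twins_eq[OF assms(1-3), of s] gdist_sym assms that by auto
  then show ?thesis unfolding setdist_def by (simp cong: image_cong)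
qed

lemma setdist_twin_set:
  assumes "\<forall>u\<in>W. \<forall>w\<in>W. twins V E u w" "W \<subseteq> V" "v \<in> V - W" "w \<in> W"
  shows "setdist V E v W = gdist V E v w"
proof -
  have "gdist V E v u = gdist V E v w" if "u \<in> W" for u
    by (rule gdist_twins_eq) (use assms that in blast)+
  then have "gdist V E v ` W = (\<lambda>_. gdist V E v w) ` W" by (rule image_cong[OF refl])
  also have "\<dots> = {gdist V E v w}" using assms(4) by (rule image_constant)
  finally show ?thesis by (simp add: setdist_def)
qed

lemma exists_edge_leaving:
  assumes "W \<subseteq> V" "v \<in> V - W" "w \<in> W"
  obtains x w0 where "x \<in> V - W" "w0 \<in> W" "E w0 x"
proof -
  obtain xs where "walk V E xs" "hd xs = v" "last xs = w" using exists_walk assms by blast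
  then obtain a b where "E a b" "a \<in> V - W" "b \<in> W" using walk_crossing_edge assms by blast
  then show ?thesis using that adj_sym by blast
qed

lemma card_twin_class_le: "u \<in> V \<Longrightarrow> card (twin_class V E u) \<le> twin_number V E"
  unfolding twin_number_def using finite_vertices by (intro Max_ge) auto

lemma locating_partitionI:
  assumes part: "is_partition V P"
    and mates: "\<And>S a b. S \<in> P \<Longrightarrow> a \<in> S \<Longrightarrow> b \<in> S \<Longrightarrow> a \<noteq> b \<Longrightarrow>
           \<exists>T\<in>P. setdist V E a T \<noteq> setdist V E b T"
  shows "locating_partition V E P"
  unfolding locating_partition_def
proof (intro conjI ballI impI)
  fix a b assume ab: "a \<in> V" "b \<in> V" "a \<noteq> b"
  note C = class_of_mem[OF part ab(1)]
  show "\<exists>T\<in>P. setdist V E a T \<noteq> setdist V E b T"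
  proof (cases "b \<in> class_of P a")
    case True
    show ?thesis by (rule mates[OF C True ab(3)])
  next
    case False
    have "class_of P a \<subseteq> V" "class_of P a \<noteq> {}" using C part by (auto simp: is_partition_def)
    then have "setdist V E a (class_of P a) = 0" "setdist V E b (class_of P a) \<noteq> 0"
      using setdist_eq_0_iff ab C(2) False by blast+
    then show ?thesis by (intro bexI[OF _ C(1)]) simp
  qed
qed (rule part)

lemma locating_separates_twins:
  assumes "locating_partition V E P" "twins V E a b" "a \<noteq> b" "a \<in> V" "b \<in> V"
    and "S \<in> P" "a \<in> S"
  shows "b \<notin> S"
proof
  assume "b \<in> S"
  have part: "is_partition V P" using assms(1) by (simp add: locating_partition_def)
  obtain T where T: "T \<in> P" "setdist V E a T \<noteq> setdist V E b T"
    using assms by (auto simp: locating_partition_def)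
  have TV: "T \<subseteq> V" "T \<noteq> {}" using part T(1) by (auto simp: is_partition_def)
  have "a \<in> T \<or> b \<in> T" using setdist_twins_eq assms TV T by blast
  then have "T = S" using partition_class_unique[OF part] T(1) assms(6,7) \<open>b \<in> S\<close> by blast
  then show False using setdist_eq_0_iff TV T assms \<open>b \<in> S\<close> by metis
qed

lemma locating_partition_class_without_twin:
  assumes loc: "locating_partition V E P" and W: "W \<subseteq> V" "\<forall>u\<in>W. \<forall>w\<in>W. twins V E u w"
    and comp: "is_complete_on E W" and x: "x \<in> V - W" "w0 \<in> W" "E w0 x"
  shows "\<exists>S\<in>P. S \<inter> W = {}"
proof (rule ccontr)
  assume "\<not> ?thesis"
  then have meets: "\<exists>w\<in>W. w \<in> S" if "S \<in> P" for S using that by blast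
  note part = locating_partitionD(1)[OF loc]
  have classV: "S \<subseteq> V" "S \<noteq> {}" if "S \<in> P" for S using part that by (auto simp: is_partition_def)
  note Cx = class_of_mem[OF part DiffD1[OF x(1)]]
  obtain w where w: "w \<in> W" "w \<in> class_of P x" using meets[OF Cx(1)] by blast
  have "x \<noteq> w" using x(1) w(1) by blast
  then obtain S where S: "S \<in> P" "setdist V E x S \<noteq> setdist V E w S"
    using locating_partitionD(2)[OF loc] x(1) w(1) W(1) by blast
  obtain w' where w': "w' \<in> W" "w' \<in> S" using meets[OF S(1)] by blast
  show False
  proof (cases "x \<in> S")
    case True
    then have "w \<in> S" using class_of_eq[OF part S(1)] w(2) by blast
    then have "setdist V E x S = 0" "setdist V E w S = 0"
      using setdist_eq_0_iff[OF _ classV[OF S(1)]] True x(1) w(1) W(1) by auto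
    then show False using S(2) by simp
  next
    case False
    then have "w \<notin> S"
      using partition_class_unique[OF part S(1) Cx(1)] Cx(2) w(2) by blast
    then have "w \<noteq> w'" using w' by blast
    have "E w' x" using twins_adj[of V E w0 w' x] W(2) x w'(1) by auto
    then have "setdist V E x S = 1" using setdist_eq_1 classV[OF S(1)] w'(2) False x(1) adj_sym by blast
    moreover have "E w w'" using comp w(1) w'(1) \<open>w \<noteq> w'\<close> by (simp add: is_complete_on_def)
    then have "setdist V E w S = 1"
      using setdist_eq_1 classV[OF S(1)] w(1) w'(2) \<open>w \<notin> S\<close> W(1) by blast
    ultimately show False using S(2) by simp
  qed
qed

lemma card_locating_partition_gt:
  assumes loc: "locating_partition V E P" and W: "W \<subseteq> V" "\<forall>u\<in>W. \<forall>w\<in>W. twins V E u w"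
    and "is_complete_on E W" "x \<in> V - W" "w0 \<in> W" "E w0 x"
  shows "card W < card P"
proof -
  note part = locating_partitionD(1)[OF loc]
  have "P \<subseteq> Pow V" using part by (auto simp: is_partition_def)
  then have "finite P" using finite_vertices by (simp add: finite_subset)
  obtain S where S: "S \<in> P" "S \<inter> W = {}"
    using locating_partition_class_without_twin[OF assms] by blast
  have inj: "inj_on (class_of P) W"
  proof (rule inj_onI, rule ccontr)
    fix u w assume uw: "u \<in> W" "w \<in> W" "class_of P u = class_of P w" "u \<noteq> w"
    have V: "u \<in> V" "w \<in> V" using uw W(1) by auto
    have "w \<notin> class_of P u"
      using locating_separates_twins[OF loc _ uw(4) V class_of_mem[OF part V(1)]] W(2) uw(1,2)
      by blast
    moreover have "w \<in> class_of P u" using class_of_mem(2)[OF part V(2)] uw(3) by simp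
    ultimately show False by contradiction
  qed
  have "class_of P w \<in> P - {S}" if "w \<in> W" for w
    using class_of_mem[OF part, of w] S(2) W(1) that by auto
  then have "class_of P ` W \<subseteq> P - {S}" by blast
  then have "card (class_of P ` W) \<le> card (P - {S})" using \<open>finite P\<close> by (simp add: card_mono)
  then have "card W \<le> card (P - {S})" by (simp add: card_image[OF inj])
  also have "\<dots> < card P" using \<open>finite P\<close> S(1) by (rule card_Diff1_less)
  finally show ?thesis .
qed

lemma W_distinguishing_separates:
  assumes W: "W \<subseteq> V" "\<forall>u\<in>W. \<forall>w\<in>W. twins V E u w" "is_complete_on E W"
    and vd: "W_distinguishing V E W v" and x: "x \<in> V - W" and w: "w \<in> W" "ws \<in> W" "ws \<noteq> w"
  shows "setdist V E x {v} \<noteq> setdist V E w {v} \<or> setdist V E x {ws} \<noteq> setdist V E w {ws}"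
proof -
  have V: "x \<in> V" "w \<in> V" "ws \<in> V" using x w W(1) by auto
  show ?thesis
  proof (cases "\<exists>w1\<in>W. E w1 x")
    case True
    have v: "v \<in> V - W" using vd by (simp add: W_distinguishing_def)
    have "x \<in> nbhd_set V E W - W" unfolding mem_boundary_iff using x True by blast
    then have "gdist V E v x \<noteq> setdist V E v W" using vd by (simp add: W_distinguishing_def)
    also have "setdist V E v W = gdist V E v w" using setdist_twin_set[OF W(2,1) v w(1)] .
    finally have "gdist V E v x \<noteq> gdist V E v w" .
    then show ?thesis using gdist_sym[of v] v V(1,2) by simp
  next
    case False
    have "E w ws" using W(3) w by (auto simp: is_complete_on_def)
    then have "gdist V E w ws = 1" using gdist_eq_1_iff[OF V(2,3)] by simp
    moreover have "\<not> E x ws" using False w(2) adj_sym by blast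
    then have "gdist V E x ws \<noteq> 1" using gdist_eq_1_iff[OF V(1,3)] by simp
    ultimately show ?thesis by simp
  qed
qed

lemma exists_locating_partition_card:
  assumes W: "W \<subseteq> V" "\<forall>u\<in>W. \<forall>w\<in>W. twins V E u w" "is_complete_on E W"
    and vd: "W_distinguishing V E W v" and big: "card V < 2 * card W"
  shows "\<exists>P. locating_partition V E P \<and> card P = card W + 1"
proof -
  have v: "v \<in> V - W" using vd by (simp add: W_distinguishing_def)
  define R where "R = V - W - {v}"
  have VR: "V = insert v (W \<union> R)" "W \<inter> R = {}" "v \<notin> W \<union> R"
    using v W(1) by (auto simp: R_def)
  have fin: "finite W" "finite R" using finite_vertices W(1) finite_subset by (auto simp: R_def)
  then have "card V = card W + card R + 1" using VR by (simp add: card_Un_disjoint)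
  then have "card R < card W" using big by simp
  then obtain f ws where f: "f ` R \<subseteq> W" "inj_on f R" and ws: "ws \<in> W" "ws \<notin> f ` R"
    using inj_into_larger_set[OF fin(2,1)] by blast
  define P where "P = insert {v} (fibre_class f R ` W)"
  have part: "is_partition V P"
    unfolding P_def VR(1) by (rule is_partition_fibre_classes[OF f(1) VR(2,3)])
  have "fibre_class f R ws = {ws}" using ws(2) by (auto simp: fibre_class_def)
  then have singletons: "{v} \<in> P" "{ws} \<in> P" using ws(1) unfolding P_def by force+
  have "locating_partition V E P"
  proof (rule locating_partitionI[OF part])
    fix S a b assume S: "S \<in> P" "a \<in> S" "b \<in> S" "a \<noteq> b"
    then obtain w where w: "w \<in> W" "S = fibre_class f R w" by (auto simp: P_def)
    have sep: "\<exists>T\<in>P. setdist V E x T \<noteq> setdist V E w T" if x: "x \<in> R" "f x = w" for x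
    proof -
      have "ws \<noteq> w" "x \<in> V - W" using ws x by (auto simp: R_def)
      then show ?thesis
        using W_distinguishing_separates[OF W vd _ w(1) ws(1)] singletons by blast
    qed
    show "\<exists>T\<in>P. setdist V E a T \<noteq> setdist V E b T"
    proof (rule fibre_class_mates[OF f(2) VR(2) w(1) S(2,3)[unfolded w(2)] S(4)])
      assume "a = w" "b \<in> R" "f b = w"
      then obtain T where "T \<in> P" "setdist V E b T \<noteq> setdist V E a T" using sep[of b] by blast
      then show ?thesis by (metis)
    next
      assume "b = w" "a \<in> R" "f a = w"
      then show ?thesis using sep[of a] by simp
    qed
  qed
  moreover have "card P = card W + 1"
    unfolding P_def using card_fibre_classes[OF fin(1) VR(2)] VR(3) by blast
  ultimately show ?thesis by blast
qed

lemma partition_dimension_if_W_distinguishing: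
  assumes W: "W \<subseteq> V" "\<forall>u\<in>W. \<forall>w\<in>W. twins V E u w" "is_complete_on E W"
    and vd: "W_distinguishing V E W v" and big: "card V < 2 * card W"
  shows "partition_dimension V E = card W + 1"
proof -
  obtain P where P: "locating_partition V E P" "card P = card W + 1"
    using exists_locating_partition_card[OF assms] by blast
  obtain w where "w \<in> W" using big by fastforce
  moreover have "v \<in> V - W" using vd by (simp add: W_distinguishing_def)
  ultimately obtain x w0 where x: "x \<in> V - W" "w0 \<in> W" "E w0 x"
    using exists_edge_leaving[OF W(1)] by blast
  have "card W + 1 \<le> card Q" if "locating_partition V E Q" for Q
    using card_locating_partition_gt[OF that W x] by simp
  then show ?thesis using partition_dimension_eqI[OF P] by blast
qed

lemma W_distinguishing_if_isolated:
  assumes W: "W \<subseteq> V" and x: "x \<in> nbhd_set V E W - W"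
    and iso: "\<forall>y\<in>nbhd_set V E W - W. \<not> E x y"
  shows "W_distinguishing V E W x"
proof -
  obtain w0 where x': "x \<in> V - W" "w0 \<in> W" "E w0 x" using x unfolding mem_boundary_iff by blast
  then have "setdist V E x W = 1" using setdist_eq_1[OF _ W _ x'(2) adj_sym] by blast
  moreover have "gdist V E x z \<noteq> 1" if z: "z \<in> nbhd_set V E W - W" for z
  proof -
    have "z \<in> V" using z unfolding mem_boundary_iff by blast
    then show ?thesis using gdist_eq_1_iff[of x z] iso z x'(1) by auto
  qed
  ultimately show ?thesis using x'(1) by (simp add: W_distinguishing_def)
qed

lemma twins_of_universal_boundary_vertex:
  assumes W: "\<forall>u\<in>W. \<forall>w\<in>W. twins V E u w" "is_complete_on E W"
    and v: "v \<in> nbhd_set V E W - W" and univ: "\<forall>y\<in>nbhd_set V E W - W. y \<noteq> v \<longrightarrow> E v y"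
    and inner: "nbhd V E v \<subseteq> closed_nbhd_set V E W" and w0: "w0 \<in> W" "E w0 v"
  shows "twins V E w0 v"
proof -
  have v': "v \<in> V - W" using v unfolding mem_boundary_iff by blast
  have "E v y" if y: "y \<in> V" "E w0 y" "y \<noteq> v" for y
  proof (cases "y \<in> W")
    case True
    then have "E y v" using twins_adj[of V E w0 y v] W(1) w0 v' by blast
    then show ?thesis by (rule adj_sym)
  next
    case False
    then have "y \<in> nbhd_set V E W - W" unfolding mem_boundary_iff using y w0(1) by blast
    then show ?thesis using univ y(3) by blast
  qed
  moreover have "E w0 y" if y: "y \<in> V" "E v y" "y \<noteq> w0" for y
  proof (cases "y \<in> W")
    case True
    then show ?thesis using W(2) w0(1) y(3) by (simp add: is_complete_on_def)
  next
    case False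
    have "y \<in> closed_nbhd_set V E W" using inner y by (auto simp: nbhd_def)
    then obtain w1 where "w1 \<in> W" "E w1 y"
      using False by (auto simp: closed_nbhd_set_def nbhd_set_def nbhd_def)
    then show ?thesis using twins_adj[of V E w1 w0 y] W(1) w0(1) y by blast
  qed
  ultimately show ?thesis using adj_irrefl by (auto simp: twins_def nbhd_def)
qed

lemma universal_boundary_vertex_has_outer_neighbour:
  assumes tau: "tau_set V E W" and comp: "is_complete_on E W"
    and v: "v \<in> nbhd_set V E W - W" and univ: "\<forall>y\<in>nbhd_set V E W - W. y \<noteq> v \<longrightarrow> E v y"
  shows "\<exists>u\<in>V - closed_nbhd_set V E W. E v u"
proof (rule ccontr)
  assume "\<not> ?thesis"
  then have inner: "nbhd V E v \<subseteq> closed_nbhd_set V E W" by (auto simp: nbhd_def)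
  obtain w0 where w0: "v \<in> V - W" "w0 \<in> W" "E w0 v" using v unfolding mem_boundary_iff by blast
  have W: "W \<subseteq> V" "\<forall>u\<in>W. \<forall>w\<in>W. twins V E u w" "card W = twin_number V E"
    using tau by (auto simp: tau_set_def)
  have "twins V E w0 v"
    using twins_of_universal_boundary_vertex[OF W(2) comp v univ inner w0(2,3)] .
  then have "insert v W \<subseteq> twin_class V E w0" using W w0 by (auto simp: twin_class_def)
  moreover have "finite (twin_class V E w0)" using finite_vertices by (simp add: twin_class_def)
  ultimately have "card (insert v W) \<le> twin_number V E"
    using card_mono card_twin_class_le[of w0] w0(2) W(1) by (meson le_trans subsetD)
  moreover have "finite W" using W(1) finite_vertices finite_subset by blast
  ultimately show False using W(3) w0(1) by simp
qed

end

theorem lemma24: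
  fixes V :: "'a set" and E :: "'a \<Rightarrow> 'a \<Rightarrow> bool" and W :: "'a set"
  assumes "connected_graph V E"
    and "card V \<ge> 2"
    and "2 * twin_number V E > card V"
    and "tau_set V E W"
    and "is_complete_on E W"
  shows "((\<exists>v. W_distinguishing V E W v) \<longrightarrow> partition_dimension V E = twin_number V E + 1)
    \<and> ((\<exists>x\<in>nbhd_set V E W - W. \<forall>y\<in>nbhd_set V E W - W. \<not> E x y)
         \<longrightarrow> partition_dimension V E = twin_number V E + 1)
    \<and> (card (nbhd_set V E W - W) = 1 \<longrightarrow> partition_dimension V E = twin_number V E + 1)
    \<and> (\<forall>v\<in>nbhd_set V E W - W. (\<forall>y\<in>nbhd_set V E W - W. y \<noteq> v \<longrightarrow> E v y)
         \<longrightarrow> (\<exists>u\<in>V - closed_nbhd_set V E W. E v u))"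
proof -
  interpret connected_simple_graph V E by unfold_locales (rule assms(1))
  have W: "W \<subseteq> V" "\<forall>u\<in>W. \<forall>w\<in>W. twins V E u w" "card W = twin_number V E"
    using assms(4) by (auto simp: tau_set_def)
  have a: "partition_dimension V E = twin_number V E + 1" if "W_distinguishing V E W v" for v
    using partition_dimension_if_W_distinguishing W assms(3,5) that by auto
  have b: "partition_dimension V E = twin_number V E + 1"
    if "x \<in> nbhd_set V E W - W" "\<forall>y\<in>nbhd_set V E W - W. \<not> E x y" for x
    using a W_distinguishing_if_isolated W(1) that by blast
  have c: "partition_dimension V E = twin_number V E + 1"
    if "card (nbhd_set V E W - W) = 1"
    using b adj_irrefl card_1_singletonE[OF that] by (metis singletonD singletonI)
  show ?thesis
    using a b c universal_boundary_vertex_has_outer_neighbour assms(4,5) by blast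
qed

end
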